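(* Let $\mathbf{u}$ be a Sturmian sequence over $\{a,b\}$ in which the frequency of $b$ is $\alpha$, and let $\mathbf{v}=\mathrm{colour}(\mathbf{u},1^\omega,\mathbf{b})$, where $\mathbf{b}$ is a Sturmian sequence over $\{2,3\}$ in which the frequency of $3$ is $\gamma$. Suppose $1,\alpha,\alpha\gamma$ are linearly independent over $\mathbb Q$. Then $$\mathcal C_{\mathbf{v}}(n)=P_\alpha(n)+(n+1)\lceil n\alpha\rceil\quad\text{for every integer } n\ge1,$$ and $$\mathcal C^{ab}_{\mathbf{v}}(n)=4\quad\text{for every integer } n\ge\lceil 1/\alpha\rceil.$$
   Context: A Sturmian sequence is an aperiodic (not eventually periodic) $1$-balanced binary sequence, i.e. for any two factors $u,v$ of equal length and each letter $x$, $\bigl||u|_x-|v|_x\bigr|\le1$; letter frequencies in it exist and are irrational. Colouring: given $\mathbf{u}$ over $\{a,b\}$ and sequences $\mathbf{a},\mathbf{b}$ over disjoint alphabets, $\mathrm{colour}(\mathbf{u},\mathbf{a},\mathbf{b})$ is obtained from $\mathbf{u}$ by replacing the subsequence of all occurrences of $a$ (in order) by $\mathbf{a}$ and the subsequence of all occurrences of $b$ (in order) by $\mathbf{b}$; $1^\omega$ is the constant sequence $111\cdots$. $\mathcal C_{\mathbf{v}}(n)$ is the number of distinct factors of length $n$ of $\mathbf{v}$; $\mathcal C^{ab}_{\mathbf{v}}(n)$ is the number of distinct Parikh vectors (vectors of letter counts) of factors of length $n$ of $\mathbf{v}$. For irrational $\alpha\in(0,1)$, $P_\alpha(n)$ denotes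 the number of factors $u$ of length $n$ of a Sturmian sequence over $\{a,b\}$ with frequency of $b$ equal to $\alpha$ such that $(|u|_a,|u|_b)=(\lfloor(1-\alpha)n\rfloor,\lceil n\alpha\rceil)$ (this depends only on $\alpha$). *)

theory Defs
  imports Complex_Main
begin

definition factor_at :: "(nat \<Rightarrow> 'a) \<Rightarrow> nat \<Rightarrow> nat \<Rightarrow> 'a list" where
  "factor_at u i n = map u [i..<i+n]"

definition factors :: "(nat \<Rightarrow> 'a) \<Rightarrow> nat \<Rightarrow> 'a list set" where
  "factors u n = {factor_at u i n | i. True}"

definition factor_complexity :: "(nat \<Rightarrow> 'a) \<Rightarrow> nat \<Rightarrow> nat" where
  "factor_complexity u n = card (factors u n)"

definition parikh :: "'a list \<Rightarrow> ('a \<Rightarrow> nat)" where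
  "parikh w = (\<lambda>x. count_list w x)"

definition abelian_complexity :: "(nat \<Rightarrow> 'a) \<Rightarrow> nat \<Rightarrow> nat" where
  "abelian_complexity u n = card (parikh ` factors u n)"

definition balanced :: "(nat \<Rightarrow> 'a) \<Rightarrow> bool" where
  "balanced u \<longleftrightarrow> (\<forall>n. \<forall>w1\<in>factors u n. \<forall>w2\<in>factors u n. \<forall>x.
      \<bar>int (count_list w1 x) - int (count_list w2 x)\<bar> \<le> 1)"

definition eventually_periodic :: "(nat \<Rightarrow> 'a) \<Rightarrow> bool" where
  "eventually_periodic u \<longleftrightarrow> (\<exists>p>0. \<exists>N. \<forall>i\<ge>N. u (i + p) = u i)"

definition sturmian_over :: "(nat \<Rightarrow> 'a) \<Rightarrow> 'a \<Rightarrow> 'a \<Rightarrow> bool" where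
  "sturmian_over u x y \<longleftrightarrow> x \<noteq> y \<and> range u \<subseteq> {x, y} \<and> balanced u \<and> \<not> eventually_periodic u"

definition has_frequency :: "(nat \<Rightarrow> 'a) \<Rightarrow> 'a \<Rightarrow> real \<Rightarrow> bool" where
  "has_frequency u x f \<longleftrightarrow>
     ((\<lambda>n. real (card {i. i < n \<and> u i = x}) / real n) \<longlonglongrightarrow> f)"

text \<open>colour(u, A, B): the k-th occurrence (counting from 0) of letter a is replaced by A k,
  the k-th occurrence of every other letter (i.e. b) by B k.\<close>
definition colour :: "(nat \<Rightarrow> 'a) \<Rightarrow> 'a \<Rightarrow> (nat \<Rightarrow> 'c) \<Rightarrow> (nat \<Rightarrow> 'c) \<Rightarrow> (nat \<Rightarrow> 'c)" where
  "colour u a A B = (\<lambda>i. if u i = a then A (card {j. j < i \<and> u j = a})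
                         else B (card {j. j < i \<and> u j \<noteq> a}))"

text \<open>P_alpha(n), computed on a Sturmian sequence u over {a,b} with frequency alpha of b
  (the value depends only on alpha).\<close>
definition P_count :: "(nat \<Rightarrow> 'a) \<Rightarrow> 'a \<Rightarrow> 'a \<Rightarrow> real \<Rightarrow> nat \<Rightarrow> nat" where
  "P_count u a b \<alpha> n = card {w \<in> factors u n.
      int (count_list w a) = \<lfloor>(1 - \<alpha>) * real n\<rfloor> \<and> int (count_list w b) = \<lceil>real n * \<alpha>\<rceil>}"

end

theory Submission
  imports Defs "HOL-Analysis.Kronecker_Approximation_Theorem"
begin

text \<open>A balanced binary sequence whose frequency \<open>\<theta>\<close> is irrational is mechanical: the number of
  ones in its window of length \<open>m\<close> at \<open>i\<close> is \<open>\<lceil>m\<theta> - t\<rceil>\<close> for every generic \<open>t\<close> close to an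
  intercept \<open>\<tau>\<^sub>i \<in> [0, 1]\<close>, and its factors of length \<open>n\<close> are exactly the \<open>n + 1\<close> mechanical
  words of slope \<open>\<theta>\<close>. The factor of \<open>v\<close> of length \<open>n\<close> at \<open>i\<close> is determined by, and determines,
  the factor \<open>w\<close> of \<open>u\<close> at \<open>i\<close> together with the factor of \<open>b\<close> of length \<open>|w|\<^sub>b\<close> starting at the
  number of \<open>b\<close>'s before \<open>i\<close>. Up to constants the two intercepts involved are \<open>-i\<alpha>\<close> and
  \<open>-i\<alpha>\<gamma>\<close> modulo 1, so Kronecker's theorem for \<open>1, \<alpha>, \<alpha>\<gamma>\<close> shows that every such pair of
  mechanical words occurs. Summing \<open>|w|\<^sub>b + 1\<close> over the \<open>n + 1\<close> factors \<open>w\<close> of \<open>u\<close>, whose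
  \<open>b\<close>-counts are \<open>\<lfloor>n\<alpha>\<rfloor>\<close> or \<open>\<lceil>n\<alpha>\<rceil>\<close>, gives the factor complexity; the Parikh vector of a
  factor of \<open>v\<close> only records \<open>|w|\<^sub>b\<close> and the number of 3's, and these take exactly four
  combined values once \<open>n\<alpha> \<ge> 1\<close>.\<close>

section \<open>Kronecker approximation with a nonnegative multiplier\<close>

lemma Kronecker_thm_2_nat:
  fixes \<alpha> \<theta> :: "nat \<Rightarrow> real" and n :: nat
  assumes indp: "module.independent (\<lambda>r x. of_int r * x) (\<theta> ` {..n})"
    and inj\<theta>: "inj_on \<theta> {..n}" and \<theta>n: "\<theta> n = 1" and "\<epsilon> > 0"
  obtains k :: nat and m where "\<And>i. i < n \<Longrightarrow> \<bar>real k * \<theta> i - of_int (m i) - \<alpha> i\<bar> < \<epsilon>"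
proof -
  obtain K m where Km: "\<And>i. i < n \<Longrightarrow> \<bar>of_int K * \<theta> i - of_int (m i) - \<alpha> i\<bar> < \<epsilon>/2"
    using Kronecker_thm_2[OF indp inj\<theta> \<theta>n, of "\<epsilon>/2"] \<open>\<epsilon> > 0\<close> by auto
  define N :: nat where "N = nat \<lceil>2 * \<bar>K\<bar> / \<epsilon>\<rceil> + 1"
  have "N > 0" by (simp add: N_def)
  then obtain q p where q: "0 < q" and p: "\<And>i. i < n \<Longrightarrow> \<bar>of_int q * \<theta> i - of_int (p i)\<bar> < 1/N"
    using Dirichlet_approx_simult by metis
  have KN: "\<bar>K\<bar> * (1/N) < \<epsilon>/2"
  proof -
    have "2 * \<bar>K\<bar> / \<epsilon> < N" unfolding N_def by linarith
    then show ?thesis using \<open>\<epsilon> > 0\<close> \<open>N > 0\<close> by (simp add: field_simps)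
  qed
  \<comment> \<open>Adding \<open>\<bar>K\<bar>\<close> times the Dirichlet denominator \<open>q\<close> makes the multiplier nonnegative
      while moving each \<open>K * \<theta> i\<close> by less than \<open>\<epsilon>/2\<close> modulo 1.\<close>
  define k where "k = K + \<bar>K\<bar> * q"
  have "\<bar>K\<bar> \<le> \<bar>K\<bar> * q" using q by (simp add: mult_le_cancel_left1)
  then have "k \<ge> 0" by (simp add: k_def)
  have "\<bar>of_int k * \<theta> i - of_int (m i + \<bar>K\<bar> * p i) - \<alpha> i\<bar> < \<epsilon>" if "i < n" for i
  proof -
    have "of_int k * \<theta> i - of_int (m i + \<bar>K\<bar> * p i) - \<alpha> i
        = (of_int K * \<theta> i - of_int (m i) - \<alpha> i) + \<bar>K\<bar> * (of_int q * \<theta> i - of_int (p i))"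
      by (simp add: k_def algebra_simps)
    then have "\<bar>of_int k * \<theta> i - of_int (m i + \<bar>K\<bar> * p i) - \<alpha> i\<bar>
        \<le> \<bar>of_int K * \<theta> i - of_int (m i) - \<alpha> i\<bar> + \<bar>K\<bar> * \<bar>of_int q * \<theta> i - of_int (p i)\<bar>"
      by (metis abs_triangle_ineq abs_mult abs_abs of_int_abs)
    also have "\<bar>K\<bar> * \<bar>of_int q * \<theta> i - of_int (p i)\<bar> \<le> \<bar>K\<bar> * (1/N)"
      using p[OF that] by (intro mult_left_mono) auto
    finally show ?thesis using Km[OF that] KN by linarith
  qed
  with \<open>k \<ge> 0\<close> show thesis by (intro that[of "nat k" "\<lambda>i. m i + \<bar>K\<bar> * p i"]) simp
qed

lemma simultaneous_approx_pair:
  fixes x y \<beta>1 \<beta>2 \<epsilon> :: real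
  assumes indep: "\<forall>p q r :: rat. of_rat p + of_rat q * x + of_rat r * y = 0 \<longrightarrow> p = 0 \<and> q = 0 \<and> r = 0"
    and "\<epsilon> > 0"
  obtains i :: nat and k1 k2 :: int
  where "\<bar>real i * x - of_int k1 - \<beta>1\<bar> < \<epsilon>" and "\<bar>real i * y - of_int k2 - \<beta>2\<bar> < \<epsilon>"
proof -
  interpret module "\<lambda>r x. of_int r * (x::real)"
    by unfold_locales (simp_all add: algebra_simps)
  define \<theta> :: "nat \<Rightarrow> real" where "\<theta> = (\<lambda>i. if i = 0 then x else if i = 1 then y else 1)"
  have "x \<noteq> 1" using indep[rule_format, of "-1" 1 0] by auto
  moreover have "y \<noteq> 1" using indep[rule_format, of "-1" 0 1] by auto
  moreover have "x \<noteq> y" using indep[rule_format, of 0 "-1" 1] by auto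
  ultimately have img: "\<theta> ` {..2} = {x, y, 1}" and inj: "inj_on \<theta> {..2}"
    by (auto simp: \<theta>_def atMost_Suc inj_on_def)
  have "independent (\<theta> ` {..2})"
    unfolding img
  proof
    assume "dependent {x, y, 1}"
    then obtain c where c: "\<exists>v\<in>{x, y, 1}. c v \<noteq> 0" "(\<Sum>v\<in>{x, y, 1}. of_int (c v) * v) = 0"
      by (subst (asm) dependent_finite) auto
    have "of_rat (of_int (c 1)) + of_rat (of_int (c x)) * x + of_rat (of_int (c y)) * y = 0"
      using c(2) \<open>x \<noteq> 1\<close> \<open>y \<noteq> 1\<close> \<open>x \<noteq> y\<close> by (simp add: algebra_simps)
    from indep[rule_format, OF this] c(1) show False by auto
  qed
  then obtain k m where km: "\<And>i. i < 2 \<Longrightarrow>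
      \<bar>real k * \<theta> i - of_int (m i) - (if i = 0 then \<beta>1 else \<beta>2)\<bar> < \<epsilon>"
    by (rule Kronecker_thm_2_nat[where \<alpha>="\<lambda>i. if i = 0 then \<beta>1 else \<beta>2" and \<theta>=\<theta> and n=2, OF _ inj _ \<open>\<epsilon> > 0\<close>])
      (auto simp: \<theta>_def)
  show thesis using km[of 0] km[of 1] by (intro that[of k "m 0" "m 1"]) (simp_all add: \<theta>_def)
qed

section \<open>Mechanical words\<close>

lemma of_int_mult_irrational_notin_Ints:
  assumes "\<theta> \<notin> \<rat>" "k \<noteq> 0"
  shows "of_int k * \<theta> \<notin> \<int>"
proof
  assume "of_int k * \<theta> \<in> \<int>"
  then obtain z where "of_int k * \<theta> = of_int z" by (auto elim: Ints_cases)
  with \<open>k \<noteq> 0\<close> have "\<theta> = of_int z / of_int k" by (simp add: field_simps)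
  with \<open>\<theta> \<notin> \<rat>\<close> show False by simp
qed

lemma of_nat_mult_irrational_notin_Ints:
  "\<theta> \<notin> \<rat> \<Longrightarrow> m \<noteq> 0 \<Longrightarrow> real m * \<theta> \<notin> \<int>"
  using of_int_mult_irrational_notin_Ints[of \<theta> "int m"] by simp

lemma inj_frac_of_nat_mult_irrational:
  assumes "\<theta> \<notin> \<rat>"
  shows "inj (\<lambda>m::nat. frac (real m * \<theta>))"
proof (rule injI, rule ccontr)
  fix m1 m2 :: nat
  assume "frac (real m1 * \<theta>) = frac (real m2 * \<theta>)" and "m1 \<noteq> m2"
  then obtain z where "real m1 * \<theta> = real m2 * \<theta> + of_int z" by (auto elim: frac_eqE)
  then have "of_int (int m1 - int m2) * \<theta> \<in> \<int>" by (simp add: algebra_simps)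
  with of_int_mult_irrational_notin_Ints[OF assms, of "int m1 - int m2"] \<open>m1 \<noteq> m2\<close>
  show False by simp
qed

lemma exists_cut_with_card_above:
  fixes F :: "real set"
  assumes "finite F" "F \<subseteq> {lo<..<hi}" "k \<le> card F" "lo < hi"
  shows "\<exists>t. lo < t \<and> t < hi \<and> t \<notin> F \<and> card {c\<in>F. t < c} = k"
  using assms
proof (induction "card F" arbitrary: F hi k)
  case 0
  then show ?case by (intro exI[of _ "(lo + hi) / 2"]) auto
next
  case (Suc n)
  define M where "M = Max F"
  have "F \<noteq> {}" using Suc.hyps(2) by auto
  then have "M \<in> F" and M_max: "\<And>c. c \<in> F \<Longrightarrow> c \<le> M"
    using Suc.prems(1) by (simp_all add: M_def)
  then have "lo < M" "M < hi" using Suc.prems(2) by auto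
  show ?case
  proof (cases k)
    case 0
    have "{c\<in>F. (M + hi) / 2 < c} = {}" "(M + hi) / 2 \<notin> F"
      using M_max \<open>M < hi\<close> by force+
    then have "card {c\<in>F. (M + hi) / 2 < c} = 0" by (simp only: card.empty)
    with \<open>(M + hi) / 2 \<notin> F\<close> 0 \<open>lo < M\<close> \<open>M < hi\<close> show ?thesis by (intro exI[of _ "(M + hi) / 2"]) auto
  next
    case (Suc k')
    have "card (F - {M}) = n" "F - {M} \<subseteq> {lo<..<M}" "k' \<le> card (F - {M})"
      using Suc.hyps(2) Suc.prems \<open>M \<in> F\<close> M_max Suc by (force simp: less_le)+
    from Suc.hyps(1)[OF this(1)[symmetric] _ this(2,3) \<open>lo < M\<close>] Suc.prems(1)
    obtain t where t: "lo < t" "t < M" "t \<notin> F - {M}" "card {c\<in>F - {M}. t < c} = k'"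
      by blast
    have "{c\<in>F. t < c} = insert M {c\<in>F - {M}. t < c}" using \<open>M \<in> F\<close> t(2) by auto
    then have "card {c\<in>F. t < c} = Suc k'" using t(4) Suc.prems(1) by simp
    with t \<open>M < hi\<close> Suc show ?thesis by (intro exI[of _ t]) auto
  qed
qed

lemma card_image_eq_if_same_kernel:
  assumes "\<And>x y. x \<in> S \<Longrightarrow> y \<in> S \<Longrightarrow> f x = f y \<longleftrightarrow> g x = g y"
  shows "card (f ` S) = card (g ` S)"
proof -
  define h where "h = (\<lambda>z. g (inv_into S f z))"
  have h: "h (f x) = g x" if "x \<in> S" for x
    using assms[of "inv_into S f (f x)" x] that by (simp add: h_def inv_into_into f_inv_into_f)
  have "inj_on h (f ` S)"
    by (rule inj_onI) (use assms h in fastforce)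
  moreover have "h ` f ` S = g ` S" using h by (force simp: image_image)
  ultimately show ?thesis by (metis card_image)
qed

definition mech_height :: "real \<Rightarrow> real \<Rightarrow> nat \<Rightarrow> int" where
  "mech_height \<theta> t m = \<lceil>real m * \<theta> - t\<rceil>"

definition mech_word :: "real \<Rightarrow> real \<Rightarrow> nat \<Rightarrow> bool list" where
  "mech_word \<theta> t n = map (\<lambda>m. mech_height \<theta> t (Suc m) \<noteq> mech_height \<theta> t m) [0..<n]"

text \<open>The excluded intercepts are exactly the points where \<open>mech_word \<theta> t n\<close> can change
  as \<open>t\<close> moves through \<open>(0,1)\<close>.\<close>
definition generic_intercept :: "real \<Rightarrow> nat \<Rightarrow> real \<Rightarrow> bool" where
  "generic_intercept \<theta> n t \<longleftrightarrow> 0 < t \<and> t < 1 \<and> (\<forall>m\<in>{1..n}. t \<noteq> frac (real m * \<theta>))"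

definition mech_words :: "real \<Rightarrow> nat \<Rightarrow> bool list set" where
  "mech_words \<theta> n = (\<lambda>t. mech_word \<theta> t n) ` Collect (generic_intercept \<theta> n)"

lemma mech_height_0: "0 < t \<Longrightarrow> t < 1 \<Longrightarrow> mech_height \<theta> t 0 = 0"
  unfolding mech_height_def by (auto intro!: ceiling_unique)

lemma mech_height_eq:
  assumes "0 < t" "t < 1" "t \<noteq> frac (real m * \<theta>)"
  shows "mech_height \<theta> t m = \<lfloor>real m * \<theta>\<rfloor> + of_bool (t < frac (real m * \<theta>))"
proof -
  have "of_int \<lfloor>real m * \<theta>\<rfloor> \<le> real m * \<theta>" "real m * \<theta> < of_int \<lfloor>real m * \<theta>\<rfloor> + 1"
    by linarith+
  with assms show ?thesis
    unfolding mech_height_def frac_def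
    by (cases "t < real m * \<theta> - \<lfloor>real m * \<theta>\<rfloor>"; simp; intro ceiling_unique; linarith)
qed

lemma mech_height_Suc:
  assumes "0 < \<theta>" "\<theta> < 1"
  shows "mech_height \<theta> t (Suc m) = mech_height \<theta> t m \<or> mech_height \<theta> t (Suc m) = mech_height \<theta> t m + 1"
proof -
  define x where "x = real m * \<theta> - t"
  have "real (Suc m) * \<theta> - t = x + \<theta>" by (simp add: algebra_simps x_def)
  moreover have "\<lceil>x\<rceil> \<le> \<lceil>x + \<theta>\<rceil>" using assms by (intro ceiling_mono) simp
  moreover have "x + \<theta> \<le> of_int \<lceil>x\<rceil> + 1"
    using assms le_of_int_ceiling[of x] by linarith
  then have "\<lceil>x + \<theta>\<rceil> \<le> \<lceil>x\<rceil> + 1" by (simp add: ceiling_le_iff)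
  ultimately show ?thesis unfolding mech_height_def x_def[symmetric] by linarith
qed

lemma length_mech_word [simp]: "length (mech_word \<theta> t n) = n"
  by (simp add: mech_word_def)

lemma take_mech_word: "m \<le> n \<Longrightarrow> take m (mech_word \<theta> t n) = mech_word \<theta> t m"
  by (simp add: mech_word_def take_map)

lemma count_mech_word:
  assumes "0 < \<theta>" "\<theta> < 1" "0 < t" "t < 1"
  shows "int (count_list (mech_word \<theta> t n) True) = mech_height \<theta> t n"
proof (induction n)
  case 0
  then show ?case using mech_height_0 assms by (simp add: mech_word_def)
next
  case (Suc n)
  then show ?case using mech_height_Suc[OF assms(1,2), of t n] by (auto simp: mech_word_def)
qed

lemma mech_word_eq_iff:
  assumes "0 < \<theta>" "\<theta> < 1" "generic_intercept \<theta> n t" "generic_intercept \<theta> n t'"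
  shows "mech_word \<theta> t n = mech_word \<theta> t' n \<longleftrightarrow>
     {m\<in>{1..n}. t < frac (real m * \<theta>)} = {m\<in>{1..n}. t' < frac (real m * \<theta>)}"
proof -
  have heights: "mech_word \<theta> t n = mech_word \<theta> t' n \<longleftrightarrow>
      (\<forall>m\<le>n. mech_height \<theta> t m = mech_height \<theta> t' m)"
  proof
    assume eq: "mech_word \<theta> t n = mech_word \<theta> t' n"
    show "\<forall>m\<le>n. mech_height \<theta> t m = mech_height \<theta> t' m"
    proof (intro allI impI)
      fix m assume "m \<le> n"
      then have "mech_word \<theta> t m = mech_word \<theta> t' m" using eq by (metis take_mech_word)
      then show "mech_height \<theta> t m = mech_height \<theta> t' m"
        using count_mech_word[OF assms(1,2)] assms(3,4) by (metis generic_intercept_def)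
    qed
  qed (simp add: mech_word_def)
  have "mech_height \<theta> t m = mech_height \<theta> t' m \<longleftrightarrow>
      (t < frac (real m * \<theta>) \<longleftrightarrow> t' < frac (real m * \<theta>))" if "m \<in> {1..n}" for m
    using that assms(3,4) by (simp add: generic_intercept_def mech_height_eq)
  moreover have "mech_height \<theta> t 0 = mech_height \<theta> t' 0"
    using assms(3,4) by (simp add: generic_intercept_def mech_height_0)
  ultimately have "(\<forall>m\<le>n. mech_height \<theta> t m = mech_height \<theta> t' m) \<longleftrightarrow>
      (\<forall>m\<in>{1..n}. t < frac (real m * \<theta>) \<longleftrightarrow> t' < frac (real m * \<theta>))"
    by (metis atLeastAtMost_iff leI less_one)
  with heights show ?thesis by blast
qed

lemma generic_intercept_with_card_above:
  assumes "\<theta> \<notin> \<rat>" "k \<le> n"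
  obtains t where "generic_intercept \<theta> n t" "card {m\<in>{1..n}. t < frac (real m * \<theta>)} = k"
proof -
  define f where "f = (\<lambda>m::nat. frac (real m * \<theta>))"
  have inj: "inj_on f {1..n}"
    unfolding f_def using inj_frac_of_nat_mult_irrational[OF assms(1)] by (rule inj_on_subset) simp
  have "f m \<in> {0<..<1}" if "m \<in> {1..n}" for m
    using of_nat_mult_irrational_notin_Ints[OF assms(1), of m] that by (simp add: f_def frac_lt_1)
  then have "f ` {1..n} \<subseteq> {0<..<1}" by blast
  moreover have "k \<le> card (f ` {1..n})" using assms(2) card_image[OF inj] by simp
  ultimately obtain t where t: "0 < t" "t < 1" "t \<notin> f ` {1..n}" "card {c\<in>f ` {1..n}. t < c} = k"
    using exists_cut_with_card_above[of "f ` {1..n}" 0 1 k] by auto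
  have "{c\<in>f ` {1..n}. t < c} = f ` {m\<in>{1..n}. t < f m}" by auto
  moreover have "card (f ` {m\<in>{1..n}. t < f m}) = card {m\<in>{1..n}. t < f m}"
    by (rule card_image, rule inj_on_subset[OF inj]) auto
  ultimately have "card {m\<in>{1..n}. t < f m} = k" using t(4) by simp
  with t show thesis by (intro that) (auto simp: generic_intercept_def f_def)
qed

lemma card_mech_words:
  assumes "0 < \<theta>" "\<theta> < 1" "\<theta> \<notin> \<rat>"
  shows "card (mech_words \<theta> n) = n + 1"
proof -
  define above where "above t = {m\<in>{1..n}. t < frac (real m * \<theta>)}" for t
  have "card (mech_words \<theta> n) = card (above ` Collect (generic_intercept \<theta> n))"
    unfolding mech_words_def above_def
    by (rule card_image_eq_if_same_kernel) (simp add: mech_word_eq_iff[OF assms(1,2)])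
  also have "\<dots> = card ((\<lambda>t. card (above t)) ` Collect (generic_intercept \<theta> n))"
  proof (rule card_image_eq_if_same_kernel)
    fix t t'
    \<comment> \<open>the sets \<open>above t\<close> are nested, so they are determined by their sizes\<close>
    have "above t' \<subseteq> above t \<or> above t \<subseteq> above t'"
      by (cases "t \<le> t'") (auto simp: above_def)
    moreover have "finite (above t)" "finite (above t')" by (simp_all add: above_def)
    ultimately show "above t = above t' \<longleftrightarrow> card (above t) = card (above t')"
      by (metis card_subset_eq)
  qed
  also have "(\<lambda>t. card (above t)) ` Collect (generic_intercept \<theta> n) = {0..n}"
  proof (intro equalityI subsetI)
    fix k assume "k \<in> (\<lambda>t. card (above t)) ` Collect (generic_intercept \<theta> n)"
    then obtain t where "k = card (above t)" by blast
    moreover have "card (above t) \<le> card {1..n}" by (rule card_mono) (auto simp: above_def)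
    ultimately show "k \<in> {0..n}" by simp
  next
    fix k assume "k \<in> {0..n}"
    then obtain t where "generic_intercept \<theta> n t" "card (above t) = k"
      using generic_intercept_with_card_above[OF assms(3), of k n] by (auto simp: above_def)
    then show "k \<in> (\<lambda>t. card (above t)) ` Collect (generic_intercept \<theta> n)" by force
  qed
  finally show ?thesis by simp
qed

lemma finite_mech_words:
  "0 < \<theta> \<Longrightarrow> \<theta> < 1 \<Longrightarrow> \<theta> \<notin> \<rat> \<Longrightarrow> finite (mech_words \<theta> n)"
  using card_mech_words by (metis card.infinite nat.distinct(1) Suc_eq_plus1)

lemma length_mech_words: "c \<in> mech_words \<theta> n \<Longrightarrow> length c = n"
  by (auto simp: mech_words_def)

lemma count_mech_words:
  assumes "0 < \<theta>" "\<theta> < 1" "c \<in> mech_words \<theta> n"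
  shows "count_list c True = nat \<lfloor>real n * \<theta>\<rfloor> \<or> count_list c True = nat \<lfloor>real n * \<theta>\<rfloor> + 1"
proof -
  obtain t where t: "generic_intercept \<theta> n t" and c: "c = mech_word \<theta> t n"
    using assms(3) by (auto simp: mech_words_def)
  have "int (count_list c True) = \<lfloor>real n * \<theta>\<rfloor> + of_bool (t < frac (real n * \<theta>))"
  proof (cases "n = 0")
    case False
    with t show ?thesis
      unfolding c by (simp add: count_mech_word[OF assms(1,2)] mech_height_eq generic_intercept_def)
  qed (use t in \<open>simp add: c mech_word_def generic_intercept_def\<close>)
  then show ?thesis by (cases "t < frac (real n * \<theta>)") auto
qed

lemma count_mech_words_realized:
  assumes "0 < \<theta>" "\<theta> < 1" "\<theta> \<notin> \<rat>" "n \<ge> 1" "d \<le> 1"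
  obtains c where "c \<in> mech_words \<theta> n" "count_list c True = nat \<lfloor>real n * \<theta>\<rfloor> + d"
proof -
  define above where "above t = {m\<in>{1..n}. t < frac (real m * \<theta>)}" for t
  \<comment> \<open>an intercept above all of the \<open>frac (m * \<theta>)\<close> with \<open>1 \<le> m \<le> n\<close> if \<open>d = 0\<close>,
      below all of them if \<open>d = 1\<close>\<close>
  obtain t where t: "generic_intercept \<theta> n t" "card (above t) = d * n"
    using generic_intercept_with_card_above[OF assms(3), of "d * n" n] assms(5)
    by (auto simp: above_def)
  have "t < frac (real n * \<theta>) \<longleftrightarrow> n \<in> above t" using assms(4) by (simp add: above_def)
  also have "\<dots> \<longleftrightarrow> d = 1"
  proof (cases "d = 0")
    case True
    then show ?thesis using t(2) assms(4) by (simp add: above_def)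
  next
    case False
    with assms(5) have "d = 1" by simp
    with t(2) have "above t = {1..n}" by (intro card_subset_eq) (auto simp: above_def)
    with \<open>d = 1\<close> assms(4) show ?thesis by simp
  qed
  finally have "int (count_list (mech_word \<theta> t n) True) = \<lfloor>real n * \<theta>\<rfloor> + int d"
    using t(1) assms(4,5)
    by (auto simp: count_mech_word[OF assms(1,2)] mech_height_eq generic_intercept_def)
  moreover have "0 \<le> \<lfloor>real n * \<theta>\<rfloor>" using assms(1) by simp
  ultimately have "count_list (mech_word \<theta> t n) True = nat \<lfloor>real n * \<theta>\<rfloor> + d" by linarith
  then show thesis using t(1) by (intro that[of "mech_word \<theta> t n"]) (auto simp: mech_words_def)
qed

lemma count_image_mech_words:
  assumes "0 < \<theta>" "\<theta> < 1" "\<theta> \<notin> \<rat>" "n \<ge> 1"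
  shows "(\<lambda>c. count_list c True) ` mech_words \<theta> n = {nat \<lfloor>real n * \<theta>\<rfloor>, nat \<lfloor>real n * \<theta>\<rfloor> + 1}"
proof
  show "(\<lambda>c. count_list c True) ` mech_words \<theta> n \<subseteq> {nat \<lfloor>real n * \<theta>\<rfloor>, nat \<lfloor>real n * \<theta>\<rfloor> + 1}"
    using count_mech_words[OF assms(1,2)] by blast
  obtain c0 where "c0 \<in> mech_words \<theta> n" "count_list c0 True = nat \<lfloor>real n * \<theta>\<rfloor>"
    using count_mech_words_realized[OF assms, of 0] by auto
  moreover obtain c1 where "c1 \<in> mech_words \<theta> n" "count_list c1 True = nat \<lfloor>real n * \<theta>\<rfloor> + 1"
    using count_mech_words_realized[OF assms, of 1] by auto
  ultimately show "{nat \<lfloor>real n * \<theta>\<rfloor>, nat \<lfloor>real n * \<theta>\<rfloor> + 1} \<subseteq> (\<lambda>c. count_list c True) ` mech_words \<theta> n"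
    by (metis empty_subsetI image_eqI insert_subset)
qed

section \<open>Balanced sequences with irrational frequency\<close>

definition window_count :: "(nat \<Rightarrow> bool) \<Rightarrow> nat \<Rightarrow> nat \<Rightarrow> nat" where
  "window_count p i m = count_list (map p [i..<i+m]) True"

lemma window_count_0 [simp]: "window_count p i 0 = 0"
  by (simp add: window_count_def)

lemma window_count_Suc: "window_count p i (Suc m) = window_count p i m + of_bool (p (i + m))"
  by (simp add: window_count_def)

lemma window_count_add: "window_count p i (m + k) = window_count p i m + window_count p (i + m) k"
  by (induction k) (simp_all add: window_count_Suc add.assoc)

lemma window_count_le: "window_count p i m \<le> m"
  unfolding window_count_def using count_le_length[of "map p [i..<i+m]" True] by simp

lemma window_count_eq_card: "window_count p 0 n = card {i. i < n \<and> p i}"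
proof (induction n)
  case (Suc n)
  have "{i. i < Suc n \<and> p i} = (if p n then insert n {i. i < n \<and> p i} else {i. i < n \<and> p i})"
    by (auto simp: less_Suc_eq)
  with Suc show ?case by (simp add: window_count_Suc)
qed simp

lemma ceiling_eq_if_closer_than_frac:
  fixes x \<tau> t :: real and c :: int
  assumes "0 < \<tau>" "\<tau> < 1" "0 < t" "t < 1" "\<bar>\<tau> - t\<bar> < \<bar>t - frac x\<bar>"
    and "of_int c - 1 \<le> x - \<tau>" "x - \<tau> \<le> of_int c"
  shows "\<lceil>x - t\<rceil> = c"
proof (rule ceiling_unique)
  show "x - t \<le> of_int c"
  proof (rule ccontr)
    assume "\<not> x - t \<le> of_int c"
    with assms have "frac x = x - of_int c" by (intro frac_unique_iff[THEN iffD2]) auto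
    with \<open>\<not> x - t \<le> of_int c\<close> assms show False by auto
  qed
  show "of_int c - 1 < x - t"
  proof (rule ccontr)
    assume "\<not> of_int c - 1 < x - t"
    with assms have "frac x = x - of_int (c - 1)" by (intro frac_unique_iff[THEN iffD2]) auto
    with \<open>\<not> of_int c - 1 < x - t\<close> assms show False by auto
  qed
qed

locale balanced_irrational =
  fixes p :: "nat \<Rightarrow> bool" and \<theta> :: real
  assumes balanced: "window_count p i m \<le> window_count p j m + 1"
    and frequency: "(\<lambda>n. real (window_count p 0 n) / real n) \<longlonglongrightarrow> \<theta>"
    and irrational: "\<theta> \<notin> \<rat>"
begin

lemma slope_bounds: "0 < \<theta>" "\<theta> < 1"
proof -
  have "0 \<le> \<theta>" by (rule tendsto_lowerbound[OF frequency]) auto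
  moreover have "\<theta> \<le> 1"
    by (rule tendsto_upperbound[OF frequency])
      (auto intro!: always_eventually simp: window_count_le divide_le_eq_1)
  moreover have "\<theta> \<noteq> 0" "\<theta> \<noteq> 1" using irrational by auto
  ultimately show "0 < \<theta>" "\<theta> < 1" by auto
qed

lemma window_count_mult_bounds:
  "window_count p 0 (N * m) \<le> N * (window_count p i m + 1) \<and>
   N * window_count p i m \<le> window_count p 0 (N * m) + N"
proof (induction N)
  case (Suc N)
  moreover have "window_count p 0 (Suc N * m) = window_count p 0 (N * m) + window_count p (N * m) m"
    using window_count_add[of p 0 "N * m" m] by (simp add: add.commute)
  moreover note balanced[of "N * m" m i] balanced[of i m "N * m"]
  ultimately show ?case by simp
qed simp

lemma window_count_approx:
  assumes "m > 0"
  shows "\<bar>real (window_count p i m) - real m * \<theta>\<bar> < 1"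
proof -
  define w where "w = real (window_count p i m)"
  have lim: "(\<lambda>N. real (window_count p 0 (N * m)) / real (N * m)) \<longlonglongrightarrow> \<theta>"
  proof -
    have "strict_mono (\<lambda>N::nat. N * m)" using assms by (auto simp: strict_mono_def)
    from LIMSEQ_subseq_LIMSEQ[OF frequency this] show ?thesis by (simp add: o_def)
  qed
  have "\<theta> \<le> (w + 1) / real m"
  proof (rule tendsto_upperbound[OF lim], rule eventually_sequentiallyI[of 1])
    fix N :: nat assume "1 \<le> N"
    have "real (window_count p 0 (N * m)) \<le> real N * (w + 1)"
      using window_count_mult_bounds[of N m i, THEN conjunct1] unfolding w_def by (metis of_nat_1 of_nat_add of_nat_le_iff of_nat_mult)
    with \<open>1 \<le> N\<close> assms show "real (window_count p 0 (N * m)) / real (N * m) \<le> (w + 1) / real m"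
      by (simp add: divide_simps mult_ac)
  qed simp
  moreover have "(w - 1) / real m \<le> \<theta>"
  proof (rule tendsto_lowerbound[OF lim], rule eventually_sequentiallyI[of 1])
    fix N :: nat assume "1 \<le> N"
    have "real N * w \<le> real (window_count p 0 (N * m)) + real N"
      using window_count_mult_bounds[of N m i, THEN conjunct2] unfolding w_def by (metis of_nat_add of_nat_le_iff of_nat_mult)
    then have "real N * w * real m \<le> (real (window_count p 0 (N * m)) + real N) * real m"
      by (rule mult_right_mono) simp
    with \<open>1 \<le> N\<close> assms show "(w - 1) / real m \<le> real (window_count p 0 (N * m)) / real (N * m)"
      by (simp add: divide_simps mult_ac algebra_simps)
  qed simp
  ultimately have "w - 1 \<le> real m * \<theta>" "real m * \<theta> \<le> w + 1"
    using assms by (simp_all add: divide_simps mult_ac)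
  moreover have "real m * \<theta> \<notin> \<int>"
    using of_nat_mult_irrational_notin_Ints[OF irrational, of m] assms by simp
  then have "real m * \<theta> \<noteq> w - 1" "real m * \<theta> \<noteq> w + 1"
    unfolding w_def by (metis Ints_diff Ints_add Ints_of_nat Ints_1)+
  ultimately show ?thesis unfolding w_def by linarith
qed

definition discrepancy :: "nat \<Rightarrow> real" where
  "discrepancy i = real (window_count p 0 i) - real i * \<theta>"

lemma discrepancy_add:
  "discrepancy (i + m) = discrepancy i + real (window_count p i m) - real m * \<theta>"
  unfolding discrepancy_def by (simp add: window_count_add algebra_simps)

lemma discrepancy_diff: "\<bar>discrepancy j - discrepancy i\<bar> < 1"
proof -
  have "\<bar>discrepancy (i + m) - discrepancy i\<bar> < 1" for i m
    using window_count_approx[of m i] discrepancy_add[of i m] by (cases "m = 0") auto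
  then show ?thesis by (cases "i \<le> j") (metis abs_minus_commute le_add_diff_inverse nat_le_linear)+
qed

lemma bdd_below_discrepancy: "bdd_below (range discrepancy)"
proof (rule bdd_belowI)
  fix x assume "x \<in> range discrepancy"
  then obtain j where "x = discrepancy j" by blast
  with discrepancy_diff[of j 0] show "discrepancy 0 - 1 \<le> x" by linarith
qed

text \<open>By balance all discrepancies lie in an interval of length 1; the intercept at \<open>i\<close> is the
  discrepancy at \<open>i\<close> measured from the bottom of that interval.\<close>
definition intercept :: "nat \<Rightarrow> real" where
  "intercept i = discrepancy i - (INF j. discrepancy j)"

lemma intercept_bounds: "0 \<le> intercept i" "intercept i \<le> 1"
proof -
  show "0 \<le> intercept i"
    unfolding intercept_def using cInf_lower[OF _ bdd_below_discrepancy, of "discrepancy i"] by simp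
  have "discrepancy i - 1 \<le> discrepancy j" for j using discrepancy_diff[of j i] by linarith
  then have "discrepancy i - 1 \<le> (INF j. discrepancy j)" by (intro cINF_greatest) auto
  then show "intercept i \<le> 1" unfolding intercept_def by simp
qed

lemma intercept_add: "intercept (i + m) = intercept i + real (window_count p i m) - real m * \<theta>"
  unfolding intercept_def using discrepancy_add by simp

lemma factor_eq_mech_word:
  assumes "\<And>m. m \<le> n \<Longrightarrow> int (window_count p i m) = mech_height \<theta> t m"
  shows "map p [i..<i+n] = mech_word \<theta> t n"
proof (rule nth_equalityI)
  fix m assume "m < length (map p [i..<i+n])"
  then have "m < n" by simp
  have "p (i + m) \<longleftrightarrow> int (window_count p i (Suc m)) \<noteq> int (window_count p i m)"
    by (simp add: window_count_Suc)
  also have "\<dots> \<longleftrightarrow> mech_height \<theta> t (Suc m) \<noteq> mech_height \<theta> t m"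
    using assms[of m] assms[of "Suc m"] \<open>m < n\<close> by simp
  finally show "map p [i..<i+n] ! m = mech_word \<theta> t n ! m"
    using \<open>m < n\<close> by (simp add: mech_word_def)
qed simp

lemma exists_uniform_intercept:
  obtains t where "\<And>m. m \<le> n \<Longrightarrow> 0 < t + real (window_count p i m) - real m * \<theta>"
    and "\<And>m. m \<le> n \<Longrightarrow> t + real (window_count p i m) - real m * \<theta> < 1"
proof -
  define V where "V = (\<lambda>m. intercept (i + m)) ` {..n}"
  have V: "finite V" "V \<noteq> {}" "V \<subseteq> {0..1}" using intercept_bounds by (auto simp: V_def)
  \<comment> \<open>the intercepts cannot take both values 0 and 1, as discrepancies differ by less than 1\<close>
  have "0 \<notin> V \<or> 1 \<notin> V"
  proof (rule ccontr)
    assume "\<not> (0 \<notin> V \<or> 1 \<notin> V)"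
    then obtain m1 m2 where "intercept (i + m1) = 0" "intercept (i + m2) = 1" by (auto simp: V_def)
    with discrepancy_diff[of "i + m2" "i + m1"] show False by (simp add: intercept_def)
  qed
  then obtain s where s: "\<And>v. v \<in> V \<Longrightarrow> 0 < v + s \<and> v + s < 1"
  proof
    assume "0 \<notin> V"
    with V have "0 < Min V" by (auto simp: Min_gr_iff)
    show thesis
    proof (rule that[of "- Min V / 2"])
      fix v assume "v \<in> V"
      with V have "Min V \<le> v" "v \<le> 1" by auto
      with \<open>0 < Min V\<close> show "0 < v + - Min V / 2 \<and> v + - Min V / 2 < 1" by (intro conjI; linarith)
    qed
  next
    assume "1 \<notin> V"
    with V have "Max V < 1" by (auto simp: Max_less_iff)
    show thesis
    proof (rule that[of "1/2 - Max V / 2"])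
      fix v assume "v \<in> V"
      with V have "v \<le> Max V" "0 \<le> v" by auto
      with \<open>Max V < 1\<close> show "0 < v + (1/2 - Max V / 2) \<and> v + (1/2 - Max V / 2) < 1"
        by (intro conjI; linarith)
    qed
  qed
  show thesis
  proof (rule that[of "intercept i + s"])
    fix m assume "m \<le> n"
    then have "intercept (i + m) \<in> V" by (simp add: V_def)
    then show "0 < intercept i + s + real (window_count p i m) - real m * \<theta>"
      and "intercept i + s + real (window_count p i m) - real m * \<theta> < 1"
      using s[of "intercept (i + m)"] intercept_add[of i m] by simp_all
  qed
qed

lemma factor_in_mech_words: "map p [i..<i+n] \<in> mech_words \<theta> n"
proof -
  obtain t where t0: "\<And>m. m \<le> n \<Longrightarrow> 0 < t + real (window_count p i m) - real m * \<theta>"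
    and t1: "\<And>m. m \<le> n \<Longrightarrow> t + real (window_count p i m) - real m * \<theta> < 1"
    using exists_uniform_intercept[where n = n and i = i] by blast
  have height: "int (window_count p i m) = mech_height \<theta> t m" if "m \<le> n" for m
    unfolding mech_height_def by (rule ceiling_unique[symmetric]) (use t0[OF that] t1[OF that] in auto)
  have "generic_intercept \<theta> n t"
    unfolding generic_intercept_def
  proof (intro conjI ballI)
    show "0 < t" "t < 1" using t0[of 0] t1[of 0] by simp_all
    fix m assume m: "m \<in> {1..n}"
    show "t \<noteq> frac (real m * \<theta>)"
    proof
      assume "t = frac (real m * \<theta>)"
      \<comment> \<open>then \<open>t + window_count p i m - m \<theta>\<close> would be an integer strictly between 0 and 1\<close>
      then have "t + real (window_count p i m) - real m * \<theta>
          = of_int (int (window_count p i m) - \<lfloor>real m * \<theta>\<rfloor>)"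
        by (simp add: frac_def)
      with t0[of m] t1[of m] m
      have "0 < int (window_count p i m) - \<lfloor>real m * \<theta>\<rfloor>" "int (window_count p i m) - \<lfloor>real m * \<theta>\<rfloor> < 1"
        by (simp_all only: of_int_0_less_iff[symmetric] of_int_less_1_iff[symmetric]) auto
      then show False by linarith
    qed
  qed
  then show ?thesis using factor_eq_mech_word[OF height] by (auto simp: mech_words_def)
qed

lemma factor_eq_mech_word_near:
  assumes "generic_intercept \<theta> n t"
  obtains \<delta> where "\<delta> > 0" "\<delta> \<le> t" "\<delta> \<le> 1 - t"
    and "\<And>i. \<bar>intercept i - t\<bar> < \<delta> \<Longrightarrow> map p [i..<i+n] = mech_word \<theta> t n"
proof -
  have t: "0 < t" "t < 1" using assms by (auto simp: generic_intercept_def)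
  define D where "D = {t, 1 - t} \<union> (\<lambda>m. \<bar>t - frac (real m * \<theta>)\<bar>) ` {1..n}"
  define \<delta> where "\<delta> = Min D"
  have "finite D" "D \<noteq> {}" by (auto simp: D_def)
  then have le: "\<delta> \<le> x" if "x \<in> D" for x using that by (simp add: \<delta>_def)
  have "\<delta> \<in> D" using \<open>finite D\<close> \<open>D \<noteq> {}\<close> unfolding \<delta>_def by (rule Min_in)
  then have "\<delta> > 0" using t assms by (auto simp: D_def generic_intercept_def)
  moreover have "\<delta> \<le> t" "\<delta> \<le> 1 - t" using le by (auto simp: D_def)
  moreover have "map p [i..<i+n] = mech_word \<theta> t n" if near: "\<bar>intercept i - t\<bar> < \<delta>" for i
  proof (rule factor_eq_mech_word)
    fix m assume "m \<le> n"
    have i: "0 < intercept i" "intercept i < 1" using near \<open>\<delta> \<le> t\<close> \<open>\<delta> \<le> 1 - t\<close> by auto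
    show "int (window_count p i m) = mech_height \<theta> t m"
    proof (cases "m = 0")
      case False
      with \<open>m \<le> n\<close> have "\<delta> \<le> \<bar>t - frac (real m * \<theta>)\<bar>" using le by (auto simp: D_def)
      with near have "\<bar>intercept i - t\<bar> < \<bar>t - frac (real m * \<theta>)\<bar>" by simp
      moreover have "real (window_count p i m) - 1 \<le> real m * \<theta> - intercept i"
        "real m * \<theta> - intercept i \<le> real (window_count p i m)"
        using intercept_add[of i m] intercept_bounds[of "i + m"] by auto
      ultimately show ?thesis
        using ceiling_eq_if_closer_than_frac[OF i t, of "real m * \<theta>" "int (window_count p i m)"]
        by (simp add: mech_height_def)
    qed (simp add: mech_height_0 t)
  qed
  ultimately show thesis by (rule that)
qed

lemma intercept_near:
  fixes k :: int
  assumes "\<epsilon> \<le> t" "\<epsilon> \<le> 1 - t"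
    and "\<bar>of_int k - real i * \<theta> - (INF j. discrepancy j) - t\<bar> < \<epsilon>"
  shows "\<bar>intercept i - t\<bar> < \<epsilon>"
proof -
  define y where "y = of_int k - real i * \<theta> - (INF j. discrepancy j)"
  have "0 < y" "y < 1" using assms by (auto simp: y_def)
  \<comment> \<open>\<open>intercept i\<close> and \<open>y\<close> differ by an integer and both lie in \<open>[0, 1]\<close>, \<open>y\<close> strictly inside\<close>
  have diff: "intercept i - y = of_int (int (window_count p 0 i) - k)"
    by (simp add: intercept_def discrepancy_def y_def)
  moreover have "\<bar>intercept i - y\<bar> < 1" using \<open>0 < y\<close> \<open>y < 1\<close> intercept_bounds[of i] by auto
  ultimately have "\<bar>int (window_count p 0 i) - k\<bar> < 1" by (metis of_int_abs of_int_less_1_iff)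
  then have "intercept i = y" using diff by simp
  with assms show ?thesis by (simp add: y_def)
qed

end

lemma balanced_irrational_if_sturmian:
  assumes "sturmian_over u x y" "has_frequency u y \<theta>" "\<theta> \<notin> \<rat>"
  shows "balanced_irrational (\<lambda>i. u i = y) \<theta>"
proof
  have count: "window_count (\<lambda>i. u i = y) i m = count_list (factor_at u i m) y" for i m
    unfolding window_count_def factor_at_def by (induction m) auto
  fix i j m
  have "factor_at u i m \<in> factors u m" "factor_at u j m \<in> factors u m"
    by (auto simp: factors_def)
  with assms(1)
  have "\<bar>int (count_list (factor_at u i m) y) - int (count_list (factor_at u j m) y)\<bar> \<le> 1"
    unfolding sturmian_over_def balanced_def by blast
  then show "window_count (\<lambda>i. u i = y) i m \<le> window_count (\<lambda>i. u i = y) j m + 1"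
    unfolding count by linarith
next
  show "(\<lambda>n. real (window_count (\<lambda>i. u i = y) 0 n) / real n) \<longlonglongrightarrow> \<theta>"
    using assms(2) by (simp add: has_frequency_def window_count_eq_card)
qed fact

section \<open>Colouring a Sturmian sequence by a Sturmian sequence\<close>

fun interleave :: "bool list \<Rightarrow> nat list \<Rightarrow> nat list" where
  "interleave [] z = []"
| "interleave (False # w) z = 1 # interleave w z"
| "interleave (True # w) z = hd z # interleave w (tl z)"

lemma factor_colour:
  fixes u :: "nat \<Rightarrow> 'a" and a :: 'a and z :: "nat \<Rightarrow> nat"
  defines "p \<equiv> \<lambda>j. u j \<noteq> a"
  shows "map (colour u a (\<lambda>_. 1) z) [i..<i+n]
    = interleave (map p [i..<i+n]) (map z [window_count p 0 i..<window_count p 0 i + window_count p i n])"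
proof (induction n arbitrary: i)
  case (Suc n)
  have colour: "colour u a (\<lambda>_. 1) z i = (if p i then z (window_count p 0 i) else 1)"
    using window_count_eq_card[of p i] by (simp add: colour_def p_def)
  have "window_count p i (Suc n) = of_bool (p i) + window_count p (Suc i) n"
    using window_count_add[of p i 1 n] by (simp add: window_count_def)
  moreover have "window_count p 0 (Suc i) = window_count p 0 i + of_bool (p i)"
    by (simp add: window_count_Suc)
  ultimately show ?case
    using Suc[of "Suc i"] colour by (cases "p i") (simp_all add: upt_conv_Cons del: upt_Suc)
qed simp

lemma interleave_decode:
  "1 \<notin> set z \<Longrightarrow> length z = count_list w True \<Longrightarrow>
    map (\<lambda>c. c \<noteq> 1) (interleave w z) = w \<and> filter (\<lambda>c. c \<noteq> 1) (interleave w z) = z"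
proof (induction w z rule: interleave.induct)
  case (3 w z)
  then obtain c z' where "z = c # z'" by (cases z) auto
  with 3 show ?case by auto
qed auto

lemma count_interleave:
  "1 \<notin> set z \<Longrightarrow> length z = count_list w True \<Longrightarrow>
    count_list (interleave w z) c = (if c = 1 then count_list w False else count_list z c)"
proof (induction w z rule: interleave.induct)
  case (3 w z)
  then obtain d z' where "z = d # z'" by (cases z) auto
  with 3 show ?case by auto
qed auto

lemma count_list_False: "count_list c False = length c - count_list c True"
  by (induction c) (auto simp: Suc_diff_le count_le_length)

lemma ceiling_floor_irrational:
  assumes "\<theta> \<notin> \<rat>" "n \<ge> 1"
  shows "\<lceil>real n * \<theta>\<rceil> = \<lfloor>real n * \<theta>\<rfloor> + 1" "\<lfloor>(1 - \<theta>) * real n\<rfloor> = int n - \<lceil>real n * \<theta>\<rceil>"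
proof -
  have "real n * \<theta> \<notin> \<int>" using of_nat_mult_irrational_notin_Ints[OF assms(1)] assms(2) by simp
  then show "\<lceil>real n * \<theta>\<rceil> = \<lfloor>real n * \<theta>\<rfloor> + 1" by (metis Ints_of_int ceiling_altdef)
  have e: "(1 - \<theta>) * real n = - (real n * \<theta>) + of_int (int n)" by (simp add: algebra_simps)
  show "\<lfloor>(1 - \<theta>) * real n\<rfloor> = int n - \<lceil>real n * \<theta>\<rceil>"
    unfolding e ceiling_def floor_add_int[symmetric] by simp
qed

locale sturmian_colouring =
  fixes u :: "nat \<Rightarrow> 'a" and a b :: 'a and bs :: "nat \<Rightarrow> nat" and \<alpha> \<gamma> :: real
  assumes u_sturm: "sturmian_over u a b"
    and u_freq: "has_frequency u b \<alpha>"
    and b_sturm: "sturmian_over bs 2 3"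
    and b_freq: "has_frequency bs 3 \<gamma>"
    and lin_indep: "\<forall>p q r :: rat. of_rat p + of_rat q * \<alpha> + of_rat r * (\<alpha> * \<gamma>) = 0
                       \<longrightarrow> p = 0 \<and> q = 0 \<and> r = 0"
begin

abbreviation "pu \<equiv> \<lambda>i. u i \<noteq> a"
abbreviation "pb \<equiv> \<lambda>j. bs j = 3"
abbreviation "v \<equiv> colour u a (\<lambda>_. 1) bs"

lemma irrational_\<alpha>: "\<alpha> \<notin> \<rat>"
proof
  assume "\<alpha> \<in> \<rat>"
  then obtain q where "\<alpha> = of_rat q" by (auto elim: Rats_cases)
  then have "of_rat (- q) + of_rat 1 * \<alpha> + of_rat 0 * (\<alpha> * \<gamma>) = 0" by (simp add: of_rat_minus)
  from lin_indep[rule_format, OF this] show False by simp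
qed

lemma irrational_\<gamma>: "\<gamma> \<notin> \<rat>"
proof
  assume "\<gamma> \<in> \<rat>"
  then obtain q where "\<gamma> = of_rat q" by (auto elim: Rats_cases)
  then have "of_rat 0 + of_rat q * \<alpha> + of_rat (- 1) * (\<alpha> * \<gamma>) = 0" by (simp add: of_rat_minus)
  from lin_indep[rule_format, OF this] show False by simp
qed

lemma a_neq_b: "a \<noteq> b"
  using u_sturm by (simp add: sturmian_over_def)

lemma map_u: "map u xs = map (\<lambda>x. if x then b else a) (map pu xs)"
  using u_sturm by (auto simp: sturmian_over_def)

lemma map_bs: "map bs xs = map (\<lambda>x. if x then 3 else 2) (map pb xs)"
  using b_sturm by (auto simp: sturmian_over_def)

sublocale U: balanced_irrational pu \<alpha>
proof -
  have "pu = (\<lambda>i. u i = b)" using u_sturm by (auto simp: sturmian_over_def)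
  then show "balanced_irrational pu \<alpha>"
    using balanced_irrational_if_sturmian[OF u_sturm u_freq irrational_\<alpha>] by simp
qed

sublocale B: balanced_irrational pb \<gamma>
  by (rule balanced_irrational_if_sturmian[OF b_sturm b_freq irrational_\<gamma>])

definition factor_pairs :: "nat \<Rightarrow> (bool list \<times> bool list) set" where
  "factor_pairs n = range (\<lambda>i. (map pu [i..<i+n],
     map pb [window_count pu 0 i..<window_count pu 0 i + window_count pu i n]))"

lemma factor_pairs_subset:
  "factor_pairs n \<subseteq> Sigma (mech_words \<alpha> n) (\<lambda>c. mech_words \<gamma> (count_list c True))"
  using U.factor_in_mech_words B.factor_in_mech_words
  by (auto simp: factor_pairs_def window_count_def)

text \<open>Up to additive constants, the intercept of \<open>u\<close> at \<open>i\<close> is \<open>-i\<alpha>\<close> modulo 1, and since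
  \<open>window_count pu 0 i\<close> is \<open>i\<alpha>\<close> plus a bounded correction, the intercept of \<open>bs\<close> at that
  position is \<open>-i\<alpha>\<gamma>\<close> modulo 1 up to \<open>\<gamma>\<close> times the same correction. Kronecker's theorem for
  \<open>1, \<alpha>, \<alpha>\<gamma>\<close> therefore places both intercepts near any prescribed values.\<close>
lemma intercepts_simultaneously_near:
  assumes "0 < \<epsilon>" "\<epsilon> \<le> t" "\<epsilon> \<le> 1 - t" "\<epsilon> \<le> s" "\<epsilon> \<le> 1 - s"
  obtains i where "\<bar>U.intercept i - t\<bar> < \<epsilon>" "\<bar>B.intercept (window_count pu 0 i) - s\<bar> < \<epsilon>"
proof -
  define Lu where "Lu = (INF j. U.discrepancy j)"
  define Lb where "Lb = (INF j. B.discrepancy j)"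
  define \<beta>1 where "\<beta>1 = - (Lu + t)"
  define \<beta>2 where "\<beta>2 = - (Lu * \<gamma> + t * \<gamma> + Lb + s)"
  have "\<epsilon> / 2 > 0" using \<open>0 < \<epsilon>\<close> by simp
  then obtain i k1 k2 where i1: "\<bar>real i * \<alpha> - of_int k1 - \<beta>1\<bar> < \<epsilon> / 2"
    and i2: "\<bar>real i * (\<alpha> * \<gamma>) - of_int k2 - \<beta>2\<bar> < \<epsilon> / 2"
    by (rule simultaneous_approx_pair[OF lin_indep])
  have "\<bar>U.intercept i - t\<bar> < \<epsilon> / 2"
    using U.intercept_near[of "\<epsilon> / 2" t k1 i] i1 assms
    by (simp add: \<beta>1_def Lu_def abs_minus_commute algebra_simps)
  define j where "j = window_count pu 0 i"
  have "of_int k2 - real j * \<gamma> - Lb - s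
      = - (real i * (\<alpha> * \<gamma>) - of_int k2 - \<beta>2) - (U.intercept i - t) * \<gamma>"
    by (simp add: j_def \<beta>2_def U.intercept_def U.discrepancy_def Lu_def algebra_simps)
  moreover have "\<bar>(U.intercept i - t) * \<gamma>\<bar> \<le> \<bar>U.intercept i - t\<bar>"
    using B.slope_bounds by (simp add: abs_mult mult_left_le)
  ultimately have "\<bar>of_int k2 - real j * \<gamma> - Lb - s\<bar> < \<epsilon>"
    using i2 \<open>\<bar>U.intercept i - t\<bar> < \<epsilon> / 2\<close> by arith
  then have "\<bar>B.intercept j - s\<bar> < \<epsilon>" using B.intercept_near[of \<epsilon> s k2 j] assms by (simp add: Lb_def)
  moreover have "\<bar>U.intercept i - t\<bar> < \<epsilon>" using \<open>\<bar>U.intercept i - t\<bar> < \<epsilon> / 2\<close> \<open>0 < \<epsilon>\<close> by linarith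
  ultimately show thesis by (intro that[of i]) (simp_all add: j_def)
qed

lemma mech_word_pair_in_factor_pairs:
  assumes c1: "c1 \<in> mech_words \<alpha> n" and c2: "c2 \<in> mech_words \<gamma> (count_list c1 True)"
  shows "(c1, c2) \<in> factor_pairs n"
proof -
  obtain t where t: "generic_intercept \<alpha> n t" and c1_def: "c1 = mech_word \<alpha> t n"
    using c1 by (auto simp: mech_words_def)
  define k where "k = count_list c1 True"
  obtain s where s: "generic_intercept \<gamma> k s" and c2_def: "c2 = mech_word \<gamma> s k"
    using c2 by (auto simp: mech_words_def k_def)
  obtain \<delta>1 where \<delta>1: "\<delta>1 > 0" "\<delta>1 \<le> t" "\<delta>1 \<le> 1 - t"
    and near1: "\<And>i. \<bar>U.intercept i - t\<bar> < \<delta>1 \<Longrightarrow> map pu [i..<i+n] = c1"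
    using U.factor_eq_mech_word_near[OF t] unfolding c1_def by blast
  obtain \<delta>2 where \<delta>2: "\<delta>2 > 0" "\<delta>2 \<le> s" "\<delta>2 \<le> 1 - s"
    and near2: "\<And>j. \<bar>B.intercept j - s\<bar> < \<delta>2 \<Longrightarrow> map pb [j..<j+k] = c2"
    using B.factor_eq_mech_word_near[OF s] unfolding c2_def by blast
  obtain i where "\<bar>U.intercept i - t\<bar> < min \<delta>1 \<delta>2" "\<bar>B.intercept (window_count pu 0 i) - s\<bar> < min \<delta>1 \<delta>2"
    by (rule intercepts_simultaneously_near[of "min \<delta>1 \<delta>2" t s]) (use \<delta>1 \<delta>2 in auto)
  then have "map pu [i..<i+n] = c1" "map pb [window_count pu 0 i..<window_count pu 0 i + k] = c2"
    using near1 near2 by simp_all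
  moreover from this(1) have "window_count pu i n = k" by (simp add: k_def window_count_def)
  ultimately show ?thesis unfolding factor_pairs_def by (intro range_eqI[of _ _ i]) simp
qed

lemma factor_pairs_eq:
  "factor_pairs n = Sigma (mech_words \<alpha> n) (\<lambda>c. mech_words \<gamma> (count_list c True))"
  using factor_pairs_subset mech_word_pair_in_factor_pairs by blast

definition colour_word :: "bool list \<times> bool list \<Rightarrow> nat list" where
  "colour_word x = interleave (fst x) (map (\<lambda>y. if y then 3 else 2) (snd x))"

lemma factors_colour: "factors v n = colour_word ` factor_pairs n"
proof -
  have "factor_at v i n = colour_word (map pu [i..<i+n],
      map pb [window_count pu 0 i..<window_count pu 0 i + window_count pu i n])" for i
    unfolding factor_at_def colour_word_def factor_colour by (simp add: map_bs)
  then show ?thesis by (auto simp: factors_def factor_pairs_def)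
qed

lemma length_snd_factor_pairs: "x \<in> factor_pairs n \<Longrightarrow> length (snd x) = count_list (fst x) True"
  by (auto simp: factor_pairs_def window_count_def)

lemma inj_on_colour_word: "inj_on colour_word (factor_pairs n)"
proof (rule inj_onI)
  fix x y assume x: "x \<in> factor_pairs n" and y: "y \<in> factor_pairs n"
    and eq: "colour_word x = colour_word y"
  let ?letters = "map (\<lambda>y. if y then 3 else (2::nat))"
  have "inj ?letters" by (rule inj_mapI) (simp add: inj_def)
  have decode: "map (\<lambda>c. c \<noteq> 1) (colour_word w) = fst w \<and>
      filter (\<lambda>c. c \<noteq> 1) (colour_word w) = ?letters (snd w)" if "w \<in> factor_pairs n" for w
    unfolding colour_word_def
    by (rule interleave_decode) (auto simp: length_snd_factor_pairs[OF that])
  from decode[OF x] decode[OF y] eq have "fst x = fst y" "?letters (snd x) = ?letters (snd y)"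
    by simp_all
  with \<open>inj ?letters\<close> show "x = y" by (auto simp: prod_eq_iff dest: injD)
qed

lemma card_factors_colour: "card (factors v n) = (\<Sum>c\<in>mech_words \<alpha> n. count_list c True + 1)"
proof -
  have "card (factors v n) = card (factor_pairs n)"
    unfolding factors_colour by (rule card_image[OF inj_on_colour_word])
  also have "\<dots> = (\<Sum>c\<in>mech_words \<alpha> n. card (mech_words \<gamma> (count_list c True)))"
    unfolding factor_pairs_eq
    using finite_mech_words U.slope_bounds U.irrational B.slope_bounds B.irrational
    by (subst card_SigmaI) auto
  finally show ?thesis using card_mech_words[OF B.slope_bounds B.irrational] by simp
qed

lemma factors_u: "factors u n = map (\<lambda>x. if x then b else a) ` mech_words \<alpha> n"
proof -
  have "mech_words \<gamma> k \<noteq> {}" for k using card_mech_words[OF B.slope_bounds B.irrational, of k] by auto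
  then have "fst ` factor_pairs n = mech_words \<alpha> n" unfolding factor_pairs_eq by force
  moreover have "factors u n = map (\<lambda>x. if x then b else a) ` fst ` factor_pairs n"
    by (auto simp: factors_def factor_pairs_def factor_at_def map_u image_image)
  ultimately show ?thesis by simp
qed

lemma P_count_eq:
  assumes "n \<ge> 1"
  shows "P_count u a b \<alpha> n = card {c\<in>mech_words \<alpha> n. count_list c True = nat \<lfloor>real n * \<alpha>\<rfloor> + 1}"
proof -
  define letter where "letter x = (if x then b else a)" for x
  have "inj letter" using a_neq_b by (simp add: inj_def letter_def)
  moreover have "letter True = b" "letter False = a" by (simp_all add: letter_def)
  ultimately have count: "count_list (map letter c) b = count_list c True"
      "count_list (map letter c) a = count_list c False" for c
    by (metis count_list_map_conv)+
  have floor_nonneg: "0 \<le> \<lfloor>real n * \<alpha>\<rfloor>" using U.slope_bounds by simp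
  have "int (count_list (map letter c) a) = \<lfloor>(1 - \<alpha>) * real n\<rfloor> \<and>
        int (count_list (map letter c) b) = \<lceil>real n * \<alpha>\<rceil> \<longleftrightarrow>
      count_list c True = nat \<lfloor>real n * \<alpha>\<rfloor> + 1" if "c \<in> mech_words \<alpha> n" for c
    using ceiling_floor_irrational[OF U.irrational assms] count count_list_False[of c]
      length_mech_words[OF that] count_le_length[of c True] floor_nonneg
    by (auto; linarith)
  then have "{w \<in> factors u n. int (count_list w a) = \<lfloor>(1 - \<alpha>) * real n\<rfloor> \<and>
      int (count_list w b) = \<lceil>real n * \<alpha>\<rceil>}
    = map letter ` {c\<in>mech_words \<alpha> n. count_list c True = nat \<lfloor>real n * \<alpha>\<rfloor> + 1}"
    unfolding factors_u letter_def[symmetric] by blast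
  moreover have "inj_on (map letter) A" for A using inj_mapI[OF \<open>inj letter\<close>] by (rule inj_on_subset) simp
  ultimately show ?thesis unfolding P_count_def by (simp add: card_image)
qed

lemma factor_complexity_colour:
  assumes "n \<ge> 1"
  shows "int (factor_complexity v n) = int (P_count u a b \<alpha> n) + (int n + 1) * \<lceil>real n * \<alpha>\<rceil>"
proof -
  define f where "f = nat \<lfloor>real n * \<alpha>\<rfloor>"
  define C where "C = {c\<in>mech_words \<alpha> n. count_list c True = f + 1}"
  have fin: "finite (mech_words \<alpha> n)" using finite_mech_words U.slope_bounds U.irrational by blast
  have "count_list c True + 1 = (f + 1) + of_bool (c \<in> C)" if "c \<in> mech_words \<alpha> n" for c
    using count_mech_words[OF U.slope_bounds that] that by (auto simp: C_def f_def)
  then have "factor_complexity v n = (\<Sum>c\<in>mech_words \<alpha> n. (f + 1) + of_bool (c \<in> C))"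
    unfolding factor_complexity_def card_factors_colour by (rule sum.cong[OF refl])
  also have "\<dots> = (\<Sum>c\<in>mech_words \<alpha> n. f + 1) + (\<Sum>c\<in>mech_words \<alpha> n. of_bool (c \<in> C))"
    by (rule sum.distrib)
  also have "\<dots> = (n + 1) * (f + 1) + card C"
    using fin card_mech_words[OF U.slope_bounds U.irrational, of n]
    by (simp only: sum_of_bool_eq sum_constant) (simp add: Int_absorb1 C_def)
  also have "card C = P_count u a b \<alpha> n" using P_count_eq[OF assms] by (simp add: C_def f_def)
  finally show ?thesis
    using ceiling_floor_irrational(1)[OF U.irrational assms] U.slope_bounds by (simp add: f_def algebra_simps)
qed

lemma count_colour_word:
  assumes "x \<in> factor_pairs n"
  shows "count_list (colour_word x) c = (if c = 1 then n - count_list (fst x) True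
    else if c = 3 then count_list (snd x) True
    else if c = 2 then count_list (fst x) True - count_list (snd x) True else 0)"
proof -
  let ?letters = "map (\<lambda>y. if y then 3 else (2::nat))"
  have "(1::nat) \<notin> set (?letters (snd x))" by auto
  then have "count_list (colour_word x) c
      = (if c = 1 then count_list (fst x) False else count_list (?letters (snd x)) c)"
    unfolding colour_word_def
    by (rule count_interleave) (simp add: length_snd_factor_pairs[OF assms])
  moreover have "count_list (?letters ys) c =
      (if c = 3 then count_list ys True else if c = 2 then count_list ys False else 0)" for ys
    by (induction ys) auto
  moreover have "length (fst x) = n" using assms by (auto simp: factor_pairs_def)
  ultimately show ?thesis
    using length_snd_factor_pairs[OF assms] count_list_False[of "fst x"] count_list_False[of "snd x"]
    by simp
qed

lemma parikh_colour_word_eq_iff: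
  assumes x: "x \<in> factor_pairs n" and y: "y \<in> factor_pairs n"
  shows "parikh (colour_word x) = parikh (colour_word y) \<longleftrightarrow>
    count_list (fst x) True = count_list (fst y) True \<and> count_list (snd x) True = count_list (snd y) True"
proof
  have "count_list (fst w) True \<le> n" if "w \<in> factor_pairs n" for w
    using that count_le_length[of "fst w" True] by (auto simp: factor_pairs_def)
  note bounds = this[OF x] this[OF y]
  assume "parikh (colour_word x) = parikh (colour_word y)"
  then have "count_list (colour_word x) c = count_list (colour_word y) c" for c
    by (simp add: parikh_def fun_eq_iff)
  from this[of 1] this[of 3] bounds
  show "count_list (fst x) True = count_list (fst y) True \<and> count_list (snd x) True = count_list (snd y) True"
    by (simp add: count_colour_word[OF x] count_colour_word[OF y])
qed (simp add: parikh_def fun_eq_iff count_colour_word[OF x] count_colour_word[OF y])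

lemma count_pairs_factor_pairs:
  assumes "1 \<le> real n * \<alpha>"
  defines "f \<equiv> nat \<lfloor>real n * \<alpha>\<rfloor>" and "g \<equiv> \<lambda>k. nat \<lfloor>real k * \<gamma>\<rfloor>"
  shows "(\<lambda>x. (count_list (fst x) True, count_list (snd x) True)) ` factor_pairs n
    = (SIGMA k:{f, f + 1}. {g k, g k + 1})"
proof -
  have "n \<ge> 1" using assms by (cases n) auto
  have "1 \<le> \<lfloor>real n * \<alpha>\<rfloor>" using assms by (simp add: le_floor_iff)
  then have "f \<ge> 1" unfolding f_def by linarith
  have count_\<alpha>: "(\<lambda>c. count_list c True) ` mech_words \<alpha> n = {f, f + 1}"
    unfolding f_def by (rule count_image_mech_words[OF U.slope_bounds U.irrational \<open>n \<ge> 1\<close>])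
  have count_\<gamma>: "(\<lambda>c. count_list c True) ` mech_words \<gamma> k = {g k, g k + 1}" if "k \<ge> 1" for k
    unfolding g_def by (rule count_image_mech_words[OF B.slope_bounds B.irrational that])
  show ?thesis
  proof (intro equalityI subsetI)
    fix y assume "y \<in> (\<lambda>x. (count_list (fst x) True, count_list (snd x) True)) ` factor_pairs n"
    then obtain c1 c2 where c1: "c1 \<in> mech_words \<alpha> n"
      and c2: "c2 \<in> mech_words \<gamma> (count_list c1 True)"
      and y: "y = (count_list c1 True, count_list c2 True)"
      unfolding factor_pairs_eq by auto
    have "count_list c1 True \<in> {f, f + 1}" using c1 count_\<alpha> by blast
    moreover from this have "count_list c1 True \<ge> 1" using \<open>f \<ge> 1\<close> by auto
    then have "count_list c2 True \<in> {g (count_list c1 True), g (count_list c1 True) + 1}"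
      using c2 count_\<gamma> by blast
    ultimately show "y \<in> (SIGMA k:{f, f + 1}. {g k, g k + 1})" by (simp add: y)
  next
    fix y assume "y \<in> (SIGMA k:{f, f + 1}. {g k, g k + 1})"
    then obtain k j where y: "y = (k, j)" and k: "k \<in> {f, f + 1}" and j: "j \<in> {g k, g k + 1}"
      by blast
    obtain c1 where c1: "c1 \<in> mech_words \<alpha> n" "count_list c1 True = k"
      using k count_\<alpha> by (metis imageE)
    have "k \<ge> 1" using k \<open>f \<ge> 1\<close> by auto
    then obtain c2 where c2: "c2 \<in> mech_words \<gamma> k" "count_list c2 True = j"
      using j count_\<gamma> by (metis imageE)
    have "(c1, c2) \<in> factor_pairs n" unfolding factor_pairs_eq using c1 c2 by simp
    then show "y \<in> (\<lambda>x. (count_list (fst x) True, count_list (snd x) True)) ` factor_pairs n"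
      using c1 c2 by (intro image_eqI[of _ _ "(c1, c2)"]) (simp_all add: y)
  qed
qed

lemma abelian_complexity_colour:
  assumes "1 \<le> real n * \<alpha>"
  shows "abelian_complexity v n = 4"
proof -
  have "abelian_complexity v n = card ((parikh \<circ> colour_word) ` factor_pairs n)"
    unfolding abelian_complexity_def factors_colour by (simp add: image_comp)
  also have "\<dots> = card ((\<lambda>x. (count_list (fst x) True, count_list (snd x) True)) ` factor_pairs n)"
    by (rule card_image_eq_if_same_kernel) (simp add: parikh_colour_word_eq_iff)
  also have "\<dots> = 4"
    unfolding count_pairs_factor_pairs[OF assms] by (simp add: card_SigmaI)
  finally show ?thesis .
qed

end

theorem theorem3:
  fixes u :: "nat \<Rightarrow> 'a" and a b :: 'a and bs :: "nat \<Rightarrow> nat"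
    and \<alpha> \<gamma> :: real
  assumes u_sturm: "sturmian_over u a b"
    and u_freq: "has_frequency u b \<alpha>"
    and b_sturm: "sturmian_over bs 2 3"
    and b_freq: "has_frequency bs 3 \<gamma>"
    and lin_indep: "\<forall>p q r :: rat. of_rat p + of_rat q * \<alpha> + of_rat r * (\<alpha> * \<gamma>) = 0
                       \<longrightarrow> p = 0 \<and> q = 0 \<and> r = 0"
  shows "(\<forall>n::nat. n \<ge> 1 \<longrightarrow>
            int (factor_complexity (colour u a (\<lambda>_. 1) bs) n)
              = int (P_count u a b \<alpha> n) + (int n + 1) * \<lceil>real n * \<alpha>\<rceil>)
       \<and> (\<forall>n::nat. int n \<ge> \<lceil>1 / \<alpha>\<rceil> \<longrightarrow>
            abelian_complexity (colour u a (\<lambda>_. 1) bs) n = 4)"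
proof -
  interpret sturmian_colouring u a b bs \<alpha> \<gamma>
    using assms by (rule sturmian_colouring.intro)
  have "1 \<le> real n * \<alpha>" if "\<lceil>1 / \<alpha>\<rceil> \<le> int n" for n
  proof -
    from that have "1 / \<alpha> \<le> real n" by (simp add: ceiling_le_iff)
    with U.slope_bounds show ?thesis by (simp add: divide_le_eq mult.commute)
  qed
  then show ?thesis using factor_complexity_colour abelian_complexity_colour by blast
qed

end
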